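(* Let $p$ be an odd prime, $a\ge1$ an integer, and $N$ a positive integer with $p\mid N$. Then \[ \sum_{b=0}^{a}\binom{a}{b}F_a^{(b)}(\emptyset,2N,p)=\frac{N}{a+1}\,Z_{a+1}(N,p). \]
   Context: For a prime $p$, $\mathcal P_p$ is the set of positive integers not divisible by $p$. $Z_n(N,p):=\sum\frac{1}{l_1\cdots l_n}$ over $(l_1,\dots,l_n)\in\mathcal P_p^n$ with $l_1+\dots+l_n=N$ (for $p\mid N$). Write $\bar1$ for a formal "signed $1$", $\varepsilon(1)=1$, $\varepsilon(\bar1)=-1$. For integers $a\ge b\ge0$, $d\ge0$, $\mathbf s=(s_1,\dots,s_d)\in\{1,\bar1\}^d$, and $M$ with $p\mid M$, \[F_a^{(b)}(\mathbf s,M,p):=\sum\frac{\varepsilon(s_1)^{i_1}\cdots\varepsilon(s_d)^{i_d}(-1)^{l_1+\dots+l_b}}{i_1\cdots i_d\,l_1\cdots l_a},\] the sum over integers $i_1,\dots,i_d$ and $l_1,\dots,l_a\in\mathcal P_p$ with $M>i_1>\dots>i_d>l_1+\dots+l_a$ and $M-i_1,\ i_1-i_2,\dots,i_{d-1}-i_d,\ i_d-(l_1+\dots+l_a)\in\mathcal P_p$ (when $d=0$ the conditions read $M>l_1+\dots+l_a$ and $M-(l_1+\dots+l_a)\in\mathcal P_p$). $\emptyset$ is the empty tuple. *)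

theory Defs
  imports Complex_Main "HOL-Library.FuncSet" "HOL-Computational_Algebra.Primes"
begin

definition PP :: "nat \<Rightarrow> nat set" where
  "PP p = {l. 0 < l \<and> \<not> p dvd l}"

definition Zsum :: "nat \<Rightarrow> nat \<Rightarrow> nat \<Rightarrow> real" where
  "Zsum n N p = (\<Sum>l \<in> {l \<in> {..<n} \<rightarrow>\<^sub>E {1..N}. (\<forall>j<n. l j \<in> PP p) \<and> (\<Sum>j<n. l j) = N}.
       1 / (\<Prod>j<n. real (l j)))"

text \<open>Signed ones: True encodes the signed one (bar 1), False encodes 1.\<close>
definition eps :: "bool \<Rightarrow> real" where
  "eps s = (if s then -1 else 1)"

text \<open>The chain M = c_0 > c_1 = i_1 > ... > c_d = i_d > c_(d+1) = l_1+...+l_a.\<close>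
definition chain_val :: "nat \<Rightarrow> nat \<Rightarrow> (nat \<Rightarrow> nat) \<Rightarrow> nat \<Rightarrow> nat \<Rightarrow> nat" where
  "chain_val M d i L k = (if k = 0 then M else if k \<le> d then i (k - 1) else L)"

definition Fsum :: "nat \<Rightarrow> nat \<Rightarrow> bool list \<Rightarrow> nat \<Rightarrow> nat \<Rightarrow> real" where
  "Fsum a b s M p = (let d = length s in
     (\<Sum>(i, l) \<in> {(i, l). i \<in> {..<d} \<rightarrow>\<^sub>E {1..M} \<and> l \<in> {..<a} \<rightarrow>\<^sub>E {1..M}
          \<and> (\<forall>j<a. l j \<in> PP p)
          \<and> (\<forall>k\<le>d. chain_val M d i (\<Sum>j<a. l j) (Suc k) < chain_val M d i (\<Sum>j<a. l j) k
                 \<and> chain_val M d i (\<Sum>j<a. l j) k - chain_val M d i (\<Sum>j<a. l j) (Suc k) \<in> PP p)}.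
        (\<Prod>j<d. eps (s ! j) ^ (i j)) * (-1) ^ (\<Sum>j<b. l j)
        / ((\<Prod>j<d. real (i j)) * (\<Prod>j<a. real (l j)))))"

end

theory Submission
  imports Defs "HOL-Combinatorics.Transposition"
begin

(* For d = 0, F_a^(b)(empty, 2N, p) is a sum over tuples l in P_p^a with 2N - (l_1 + ... + l_a)
   in P_p, a set invariant under permuting the entries.  Hence the sign (-1)^(l_1 + ... + l_b)
   may be replaced by (-1)^(sum of l_j over j in S) for any b-subset S of the indices, and the
   binomial sum collapses to the sum of prod_j (1 + (-1)^l_j) / l_j.  Only tuples with all entries
   even survive; as p is odd, halving them gives the sum of 1/(m_1 ... m_a) over m in P_p^a with
   N - (m_1 + ... + m_a) in P_p.  Appending that remainder as m_(a+1) turns this into the sum of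
   m_(a+1)/(m_1 ... m_(a+1)) over the compositions of N counted by Z_(a+1)(N, p), and by symmetry
   the numerator may be replaced by the average N/(a+1) of the parts. *)

definition PP_tuples :: "nat \<Rightarrow> nat \<Rightarrow> nat \<Rightarrow> (nat \<Rightarrow> bool) \<Rightarrow> (nat \<Rightarrow> nat) set" where
  "PP_tuples n K p Q = {l \<in> {..<n} \<rightarrow>\<^sub>E {1..K}. (\<forall>j<n. l j \<in> PP p) \<and> Q (\<Sum>j<n. l j)}"

lemma finite_PP_tuples: "finite (PP_tuples n K p Q)"
  unfolding PP_tuples_def by (rule finite_subset[of _ "{..<n} \<rightarrow>\<^sub>E {1..K}"]) (auto intro: finite_PiE)

lemma Fsum_Nil:
  "Fsum a b [] M p = (\<Sum>l\<in>PP_tuples a M p (\<lambda>s. s < M \<and> M - s \<in> PP p).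
      (-1) ^ (\<Sum>j<b. l j) / (\<Prod>j<a. real (l j)))"
proof -
  have "{(i, l). i \<in> {..<length ([] :: bool list)} \<rightarrow>\<^sub>E {1..M} \<and> l \<in> {..<a} \<rightarrow>\<^sub>E {1..M}
          \<and> (\<forall>j<a. l j \<in> PP p)
          \<and> (\<forall>k\<le>length ([] :: bool list).
               chain_val M 0 i (\<Sum>j<a. l j) (Suc k) < chain_val M 0 i (\<Sum>j<a. l j) k
             \<and> chain_val M 0 i (\<Sum>j<a. l j) k - chain_val M 0 i (\<Sum>j<a. l j) (Suc k) \<in> PP p)}
      = (\<lambda>l. (\<lambda>_. undefined, l)) ` PP_tuples a M p (\<lambda>s. s < M \<and> M - s \<in> PP p)"
    by (auto simp: PP_tuples_def chain_val_def image_iff)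
  then show ?thesis
    unfolding Fsum_def Let_def by (simp add: sum.reindex inj_on_def)
qed

lemma Zsum_eq_sum_PP_tuples:
  "Zsum n N p = (\<Sum>l\<in>PP_tuples n N p (\<lambda>s. s = N). 1 / (\<Prod>j<n. real (l j)))"
  by (simp add: Zsum_def PP_tuples_def)

lemma bij_betw_restrict_comp_PP_tuples:
  assumes \<sigma>: "bij_betw \<sigma> {..<n} {..<n}"
  shows "bij_betw (\<lambda>l. restrict (l \<circ> \<sigma>) {..<n}) (PP_tuples n K p Q) (PP_tuples n K p Q)"
proof -
  have into: "(\<lambda>l. restrict (l \<circ> \<sigma>) {..<n}) ` PP_tuples n K p Q \<subseteq> PP_tuples n K p Q"
  proof safe
    fix l assume l: "l \<in> PP_tuples n K p Q"
    have "(\<Sum>j<n. l (\<sigma> j)) = (\<Sum>j<n. l j)"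
      by (rule sum.reindex_bij_betw[OF \<sigma>])
    then show "restrict (l \<circ> \<sigma>) {..<n} \<in> PP_tuples n K p Q"
      using l bij_betwE[OF \<sigma>] by (auto simp: PP_tuples_def PiE_iff)
  qed
  have "inj_on (\<lambda>l. restrict (l \<circ> \<sigma>) {..<n}) (PP_tuples n K p Q)"
  proof (rule inj_onI)
    fix l l'
    assume l: "l \<in> PP_tuples n K p Q" and l': "l' \<in> PP_tuples n K p Q"
      and eq: "restrict (l \<circ> \<sigma>) {..<n} = restrict (l' \<circ> \<sigma>) {..<n}"
    have "l j = l' j" if j: "j \<in> {..<n}" for j
    proof -
      obtain i where "i < n" "j = \<sigma> i"
        using bij_betw_imp_surj_on[OF \<sigma>] j by (metis imageE lessThan_iff)
      then show ?thesis using fun_cong[OF eq, of i] by simp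
    qed
    then show "l = l'"
      using l l' by (auto simp: PP_tuples_def intro: PiE_ext)
  qed
  with into show ?thesis
    by (simp add: bij_betw_def endo_inj_surj finite_PP_tuples)
qed

lemma sum_PP_tuples_permute:
  assumes "bij_betw \<sigma> {..<n} {..<n}"
  shows "(\<Sum>l\<in>PP_tuples n K p Q. g l) = (\<Sum>l\<in>PP_tuples n K p Q. g (restrict (l \<circ> \<sigma>) {..<n}))"
  by (rule sum.reindex_bij_betw[OF bij_betw_restrict_comp_PP_tuples[OF assms], symmetric])

lemma prod_restrict_comp_permute:
  assumes "bij_betw \<sigma> {..<n} {..<n}"
  shows "(\<Prod>j<n. f (restrict (l \<circ> \<sigma>) {..<n} j)) = (\<Prod>j<n. f (l j))"
proof -
  have "(\<Prod>j<n. f (restrict (l \<circ> \<sigma>) {..<n} j)) = (\<Prod>j<n. f (l (\<sigma> j)))"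
    by (rule prod.cong) simp_all
  also have "\<dots> = (\<Prod>j<n. f (l j))"
    by (rule prod.reindex_bij_betw[OF assms])
  finally show ?thesis .
qed

lemma obtain_permutation_onto:
  assumes "S \<subseteq> {..<n}"
  obtains \<sigma> where "bij_betw \<sigma> {..<n} {..<n}" and "\<sigma> ` {..<card S} = S"
proof -
  have fin: "finite S" using assms finite_subset by blast
  have le: "card S \<le> n" using card_mono[OF _ assms] by simp
  obtain f where f: "bij_betw f {..<card S} S"
    using finite_same_card_bij[of "{..<card S}" S] fin by auto
  have "card ({..<n} - S) = card {card S..<n}"
    using assms fin by (simp add: card_Diff_subset)
  then obtain g where g: "bij_betw g {card S..<n} ({..<n} - S)"
    using finite_same_card_bij[of "{card S..<n}" "{..<n} - S"] by auto
  define \<sigma> where "\<sigma> j = (if j < card S then f j else g j)" for j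
  have f': "bij_betw \<sigma> {..<card S} S"
    using f by (rule bij_betw_cong[THEN iffD1, rotated]) (simp add: \<sigma>_def)
  have g': "bij_betw \<sigma> {card S..<n} ({..<n} - S)"
    using g by (rule bij_betw_cong[THEN iffD1, rotated]) (simp add: \<sigma>_def)
  have "bij_betw \<sigma> ({..<card S} \<union> {card S..<n}) (S \<union> ({..<n} - S))"
    by (rule bij_betw_combine[OF f' g']) simp
  moreover have "{..<card S} \<union> {card S..<n} = {..<n}" and "S \<union> ({..<n} - S) = {..<n}"
    using le assms by auto
  ultimately show ?thesis
    using that f' by (simp add: bij_betw_def)
qed

lemma sum_PP_tuples_sign_subset:
  assumes "S \<subseteq> {..<n}"
  shows "(\<Sum>l\<in>PP_tuples n K p Q. (-1::real) ^ (\<Sum>j\<in>S. l j) / (\<Prod>j<n. real (l j)))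
       = (\<Sum>l\<in>PP_tuples n K p Q. (-1) ^ (\<Sum>j<card S. l j) / (\<Prod>j<n. real (l j)))"
proof -
  obtain \<sigma> where \<sigma>: "bij_betw \<sigma> {..<n} {..<n}" and S: "\<sigma> ` {..<card S} = S"
    using obtain_permutation_onto[OF assms] .
  have "card S \<le> n" using card_mono[OF _ assms] by simp
  then have inj: "inj_on \<sigma> {..<card S}"
    by (intro inj_on_subset[OF bij_betw_imp_inj_on[OF \<sigma>]]) auto
  have sign_sum: "(\<Sum>j<card S. restrict (l \<circ> \<sigma>) {..<n} j) = (\<Sum>j\<in>S. l j)" for l
  proof -
    have "(\<Sum>j<card S. restrict (l \<circ> \<sigma>) {..<n} j) = (\<Sum>j<card S. l (\<sigma> j))"
      using \<open>card S \<le> n\<close> by (intro sum.cong) auto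
    also have "\<dots> = (\<Sum>j\<in>S. l j)"
      using sum.reindex[OF inj, of l] S by simp
    finally show ?thesis .
  qed
  have "(\<Sum>l\<in>PP_tuples n K p Q. (-1::real) ^ (\<Sum>j<card S. l j) / (\<Prod>j<n. real (l j)))
      = (\<Sum>l\<in>PP_tuples n K p Q. (-1) ^ (\<Sum>j<card S. restrict (l \<circ> \<sigma>) {..<n} j)
          / (\<Prod>j<n. real (restrict (l \<circ> \<sigma>) {..<n} j)))"
    by (rule sum_PP_tuples_permute[OF \<sigma>])
  then show ?thesis
    unfolding sign_sum prod_restrict_comp_permute[OF \<sigma>] by simp
qed

lemma binomial_sum_sign_PP_tuples:
  "(\<Sum>b = 0..n. real (n choose b) *
       (\<Sum>l\<in>PP_tuples n K p Q. (-1) ^ (\<Sum>j<b. l j) / (\<Prod>j<n. real (l j))))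
   = (\<Sum>l\<in>PP_tuples n K p Q. (\<Prod>j<n. (-1) ^ l j + 1) / (\<Prod>j<n. real (l j)))"
proof -
  define G where "G S = (\<Sum>l\<in>PP_tuples n K p Q. (-1::real) ^ (\<Sum>j\<in>S. l j) / (\<Prod>j<n. real (l j)))"
    for S
  have G_card: "G S = G {..<card S}" if "S \<subseteq> {..<n}" for S
    unfolding G_def using that by (rule sum_PP_tuples_sign_subset)
  have subsets_of_card: "(\<Sum>S\<in>{S \<in> Pow {..<n}. card S = b}. G S) = real (n choose b) * G {..<b}"
    for b
  proof -
    have "(\<Sum>S\<in>{S \<in> Pow {..<n}. card S = b}. G S) = (\<Sum>S\<in>{S \<in> Pow {..<n}. card S = b}. G {..<b})"
      by (intro sum.cong refl) (auto simp: G_card)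
    also have "\<dots> = real (n choose b) * G {..<b}"
      using n_subsets[of "{..<n}" b] by simp
    finally show ?thesis .
  qed
  have "(\<Sum>l\<in>PP_tuples n K p Q. (\<Prod>j<n. (-1) ^ l j + 1) / (\<Prod>j<n. real (l j)))
      = (\<Sum>l\<in>PP_tuples n K p Q. \<Sum>S\<in>Pow {..<n}. (-1) ^ (\<Sum>j\<in>S. l j) / (\<Prod>j<n. real (l j)))"
    by (simp add: prod_add power_sum sum_divide_distrib)
  also have "\<dots> = (\<Sum>S\<in>Pow {..<n}. G S)"
    unfolding G_def by (rule sum.swap)
  also have "\<dots> = (\<Sum>b = 0..n. \<Sum>S\<in>{S \<in> Pow {..<n}. card S = b}. G S)"
    by (rule sum.group[symmetric]) (auto simp: card_mono[of "{..<n}", simplified])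
  also have "\<dots> = (\<Sum>b = 0..n. real (n choose b) * G {..<b})"
    by (simp only: subsets_of_card)
  finally show ?thesis
    by (simp add: G_def)
qed

lemma PP_double_iff:
  assumes "prime p" and "odd p"
  shows "2 * x \<in> PP p \<longleftrightarrow> x \<in> PP p"
proof -
  have "\<not> p dvd 2"
    using assms prime_ge_2_nat[of p] dvd_imp_le[of p 2] by (metis le_antisym even_numeral zero_less_numeral)
  then show ?thesis
    using \<open>prime p\<close> by (simp add: PP_def prime_dvd_mult_iff)
qed

lemma prod_one_plus_sign:
  "(\<Prod>j<n. (-1::real) ^ l j + 1) = (if \<forall>j<n. even (l j) then 2 ^ n else 0)"
proof (cases "\<forall>j<n. even (l j)")
  case True
  then have "(\<Prod>j<n. (-1::real) ^ l j + 1) = (\<Prod>j<n. 2)"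
    by (intro prod.cong) auto
  with True show ?thesis by simp
next
  case False
  then obtain j where "j < n" "odd (l j)" by auto
  then have "(\<Prod>j<n. (-1::real) ^ l j + 1) = 0"
    by (intro prod_zero) (auto intro!: bexI[of _ j])
  with False show ?thesis by simp
qed

lemma bij_betw_double_PP_tuples:
  assumes "prime p" and "odd p"
  shows "bij_betw (\<lambda>m. restrict (\<lambda>j. 2 * m j) {..<n})
           (PP_tuples n N p (\<lambda>s. s < N \<and> N - s \<in> PP p))
           {l \<in> PP_tuples n (2 * N) p (\<lambda>s. s < 2 * N \<and> 2 * N - s \<in> PP p). \<forall>j<n. even (l j)}"
proof (rule bij_betw_byWitness[where f' = "\<lambda>l. restrict (\<lambda>j. l j div 2) {..<n}"], safe)
  note PP2 = PP_double_iff[OF assms]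
  have sum_double: "(\<Sum>j<n. 2 * m j) = 2 * (\<Sum>j<n. m j)" for m :: "nat \<Rightarrow> nat"
    by (simp add: sum_distrib_left)
  show "restrict (\<lambda>j. 2 * m j) {..<n}
          \<in> PP_tuples n (2 * N) p (\<lambda>s. s < 2 * N \<and> 2 * N - s \<in> PP p)"
    if "m \<in> PP_tuples n N p (\<lambda>s. s < N \<and> N - s \<in> PP p)" for m
    using that PP2[of "N - (\<Sum>j<n. m j)"]
    by (auto simp: PP_tuples_def PiE_iff PP2 sum_double right_diff_distrib')
  fix l assume l: "l \<in> PP_tuples n (2 * N) p (\<lambda>s. s < 2 * N \<and> 2 * N - s \<in> PP p)"
    and even: "\<forall>j<n. even (l j)"
  define m where "m = restrict (\<lambda>j. l j div 2) {..<n}"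
  have l_eq: "l j = 2 * m j" if "j < n" for j
    using even that by (simp add: m_def)
  then have sum_l: "(\<Sum>j<n. l j) = 2 * (\<Sum>j<n. m j)"
    by (simp add: sum_double)
  have m_PP: "m j \<in> PP p" if "j < n" for j
    using l that l_eq PP2 by (auto simp: PP_tuples_def)
  have m_le: "m j \<le> (\<Sum>j<n. m j)" if "j < n" for j
    using that by (intro member_le_sum) auto
  have "(\<Sum>j<n. m j) < N" and "N - (\<Sum>j<n. m j) \<in> PP p"
    using l sum_l PP2[of "N - (\<Sum>j<n. m j)"] by (auto simp: PP_tuples_def right_diff_distrib')
  with m_PP m_le show "m \<in> PP_tuples n N p (\<lambda>s. s < N \<and> N - s \<in> PP p)"
    by (fastforce simp: PP_tuples_def PiE_iff PP_def m_def)
qed (auto simp: PP_tuples_def PiE_iff extensional_def)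

lemma sum_PP_tuples_even_part:
  assumes "prime p" and "odd p"
  shows "(\<Sum>l\<in>PP_tuples n (2 * N) p (\<lambda>s. s < 2 * N \<and> 2 * N - s \<in> PP p).
            (\<Prod>j<n. (-1) ^ l j + 1) / (\<Prod>j<n. real (l j)))
       = (\<Sum>m\<in>PP_tuples n N p (\<lambda>s. s < N \<and> N - s \<in> PP p). 1 / (\<Prod>j<n. real (m j)))"
proof -
  have "(\<Sum>l\<in>PP_tuples n (2 * N) p (\<lambda>s. s < 2 * N \<and> 2 * N - s \<in> PP p).
            (\<Prod>j<n. (-1) ^ l j + 1) / (\<Prod>j<n. real (l j)))
      = (\<Sum>l\<in>PP_tuples n (2 * N) p (\<lambda>s. s < 2 * N \<and> 2 * N - s \<in> PP p).
            if \<forall>j<n. even (l j) then 2 ^ n / (\<Prod>j<n. real (l j)) else 0)"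
    unfolding prod_one_plus_sign by (intro sum.cong refl) auto
  also have "\<dots> = (\<Sum>l\<in>{l \<in> PP_tuples n (2 * N) p (\<lambda>s. s < 2 * N \<and> 2 * N - s \<in> PP p).
                        \<forall>j<n. even (l j)}.
            2 ^ n / (\<Prod>j<n. real (l j)))"
    by (rule sum.inter_filter[OF finite_PP_tuples, symmetric])
  also have "\<dots> = (\<Sum>m\<in>PP_tuples n N p (\<lambda>s. s < N \<and> N - s \<in> PP p).
            2 ^ n / (\<Prod>j<n. real (restrict (\<lambda>j. 2 * m j) {..<n} j)))"
    by (rule sum.reindex_bij_betw[OF bij_betw_double_PP_tuples[OF assms], symmetric])
  also have "\<dots> = (\<Sum>m\<in>PP_tuples n N p (\<lambda>s. s < N \<and> N - s \<in> PP p). 1 / (\<Prod>j<n. real (m j)))"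
    by (simp add: prod.distrib)
  finally show ?thesis .
qed

lemma bij_betw_append_remainder_PP_tuples:
  "bij_betw (\<lambda>m. m(n := N - (\<Sum>j<n. m j)))
     (PP_tuples n N p (\<lambda>s. s < N \<and> N - s \<in> PP p)) (PP_tuples (Suc n) N p (\<lambda>s. s = N))"
proof (rule bij_betw_byWitness[where f' = "\<lambda>c. restrict c {..<n}"], safe)
  fix m assume m: "m \<in> PP_tuples n N p (\<lambda>s. s < N \<and> N - s \<in> PP p)"
  then show "restrict (m(n := N - (\<Sum>j<n. m j))) {..<n} = m"
    by (auto simp: PP_tuples_def)
  have "(\<Sum>j<n. (m(n := N - (\<Sum>j<n. m j))) j) = (\<Sum>j<n. m j)"
    by (intro sum.cong) auto
  with m show "m(n := N - (\<Sum>j<n. m j)) \<in> PP_tuples (Suc n) N p (\<lambda>s. s = N)"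
    by (auto simp: PP_tuples_def PiE_iff less_Suc_eq extensional_def)
next
  fix c assume c: "c \<in> PP_tuples (Suc n) N p (\<lambda>s. s = N)"
  then have sum_c: "(\<Sum>j<n. c j) + c n = N" and "c n \<in> PP p"
    by (auto simp: PP_tuples_def)
  then have "c n > 0" by (simp add: PP_def)
  with c sum_c show "(restrict c {..<n})(n := N - (\<Sum>j<n. restrict c {..<n} j)) = c"
    by (auto simp: PP_tuples_def PiE_iff fun_eq_iff extensional_def)
  from c sum_c \<open>c n > 0\<close> \<open>c n \<in> PP p\<close>
  show "restrict c {..<n} \<in> PP_tuples n N p (\<lambda>s. s < N \<and> N - s \<in> PP p)"
    by (auto simp: PP_tuples_def PiE_iff)
qed

lemma sum_PP_tuples_append_remainder:
  "(\<Sum>m\<in>PP_tuples n N p (\<lambda>s. s < N \<and> N - s \<in> PP p). 1 / (\<Prod>j<n. real (m j)))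
   = (\<Sum>c\<in>PP_tuples (Suc n) N p (\<lambda>s. s = N). real (c n) / (\<Prod>j<Suc n. real (c j)))"
proof -
  have "(\<Sum>c\<in>PP_tuples (Suc n) N p (\<lambda>s. s = N). real (c n) / (\<Prod>j<Suc n. real (c j)))
      = (\<Sum>m\<in>PP_tuples n N p (\<lambda>s. s < N \<and> N - s \<in> PP p).
          real ((m(n := N - (\<Sum>j<n. m j))) n) / (\<Prod>j<Suc n. real ((m(n := N - (\<Sum>j<n. m j))) j)))"
    by (rule sum.reindex_bij_betw[OF bij_betw_append_remainder_PP_tuples, symmetric])
  also have "\<dots> = (\<Sum>m\<in>PP_tuples n N p (\<lambda>s. s < N \<and> N - s \<in> PP p). 1 / (\<Prod>j<n. real (m j)))"
  proof (rule sum.cong[OF refl])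
    fix m assume "m \<in> PP_tuples n N p (\<lambda>s. s < N \<and> N - s \<in> PP p)"
    then have "N - (\<Sum>j<n. m j) > 0" by (simp add: PP_tuples_def)
    moreover have "(\<Prod>j<n. real ((m(n := N - (\<Sum>j<n. m j))) j)) = (\<Prod>j<n. real (m j))"
      by (intro prod.cong) auto
    ultimately show "real ((m(n := N - (\<Sum>j<n. m j))) n) / (\<Prod>j<Suc n. real ((m(n := N - (\<Sum>j<n. m j))) j))
        = 1 / (\<Prod>j<n. real (m j))"
      using nonzero_divide_mult_cancel_right[of "real (N - (\<Sum>j<n. m j))" "\<Prod>j<n. real (m j)"]
      by (simp add: prod.lessThan_Suc del: of_nat_diff)
  qed
  finally show ?thesis ..
qed

lemma sum_PP_tuples_part_over_prod_eq:
  assumes "i < n" and "k < n"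
  shows "(\<Sum>c\<in>PP_tuples n K p Q. real (c i) / (\<Prod>j<n. real (c j)))
       = (\<Sum>c\<in>PP_tuples n K p Q. real (c k) / (\<Prod>j<n. real (c j)))"
proof -
  have \<sigma>: "bij_betw (transpose i k) {..<n} {..<n}"
    using assms by simp
  have "(\<Sum>c\<in>PP_tuples n K p Q. real (c k) / (\<Prod>j<n. real (c j)))
      = (\<Sum>c\<in>PP_tuples n K p Q. real (restrict (c \<circ> transpose i k) {..<n} k)
          / (\<Prod>j<n. real (restrict (c \<circ> transpose i k) {..<n} j)))"
    by (rule sum_PP_tuples_permute[OF \<sigma>])
  also have "\<dots> = (\<Sum>c\<in>PP_tuples n K p Q. real (c i) / (\<Prod>j<n. real (c j)))"
    unfolding prod_restrict_comp_permute[OF \<sigma>] using assms by simp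
  finally show ?thesis ..
qed

lemma sum_compositions_part_over_prod:
  assumes "k < n"
  shows "real n * (\<Sum>c\<in>PP_tuples n N p (\<lambda>s. s = N). real (c k) / (\<Prod>j<n. real (c j)))
       = real N * (\<Sum>c\<in>PP_tuples n N p (\<lambda>s. s = N). 1 / (\<Prod>j<n. real (c j)))"
proof -
  have "real n * (\<Sum>c\<in>PP_tuples n N p (\<lambda>s. s = N). real (c k) / (\<Prod>j<n. real (c j)))
      = (\<Sum>i<n. \<Sum>c\<in>PP_tuples n N p (\<lambda>s. s = N). real (c i) / (\<Prod>j<n. real (c j)))"
    using sum_PP_tuples_part_over_prod_eq[OF _ assms] by simp
  also have "\<dots> = (\<Sum>c\<in>PP_tuples n N p (\<lambda>s. s = N). (\<Sum>i<n. real (c i)) / (\<Prod>j<n. real (c j)))"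
    by (simp add: sum.swap[of _ "{..<n}"] sum_divide_distrib)
  also have "\<dots> = (\<Sum>c\<in>PP_tuples n N p (\<lambda>s. s = N). real N / (\<Prod>j<n. real (c j)))"
    by (intro sum.cong refl) (simp add: PP_tuples_def flip: of_nat_sum)
  finally show ?thesis
    by (simp add: sum_distrib_left)
qed

theorem corollary3p3:
  fixes p a N :: nat
  assumes "prime p" and "odd p" and "a \<ge> 1" and "N > 0" and "p dvd N"
  shows "(\<Sum>b = 0..a. real (a choose b) * Fsum a b [] (2 * N) p)
           = real N / real (a + 1) * Zsum (a + 1) N p"
proof -
  have "(\<Sum>b = 0..a. real (a choose b) * Fsum a b [] (2 * N) p)
      = (\<Sum>m\<in>PP_tuples a N p (\<lambda>s. s < N \<and> N - s \<in> PP p). 1 / (\<Prod>j<a. real (m j)))"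
    by (simp only: Fsum_Nil binomial_sum_sign_PP_tuples sum_PP_tuples_even_part[OF assms(1,2)])
  also have "\<dots> = (\<Sum>c\<in>PP_tuples (Suc a) N p (\<lambda>s. s = N). real (c a) / (\<Prod>j<Suc a. real (c j)))"
    by (rule sum_PP_tuples_append_remainder)
  also have "\<dots> = real N / real (a + 1) * Zsum (a + 1) N p"
    using sum_compositions_part_over_prod[of a "Suc a" N p]
    by (simp add: Zsum_eq_sum_PP_tuples field_simps)
  finally show ?thesis .
qed

end
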